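(* Fix $n$, generators $x_{i_1},\dots,x_{i_k}\in\mathcal{B}_n$, an index $j$, integers $a_h$ ($h\ne j$), and set $V(e)=V_n(x_{i_1}^{a_1}\cdots x_{i_j}^{e}\cdots x_{i_k}^{a_k})$ for $e\in\mathbb{Z}$. Then for every $e\in\mathbb{Z}$: (a) $\mathrm{ord}\,V(e+2)\ge1+\min(\mathrm{ord}\,V(e),\mathrm{ord}\,V(e+1))$; (b) for every $m\ge2$, $\mathrm{ord}\,V(e+m)\ge\min(\mathrm{ord}\,V(e),\mathrm{ord}\,V(e+1))+(m-1)$. In particular, for all sufficiently large $e$, $V(e)$ is a polynomial in $s$.
   Context: $\mathcal{B}_n$ is the Artin braid group with generators $x_1,\dots,x_{n-1}$; $V_n(\beta)$ is the Jones polynomial of the closure of $\beta$, normalized by $V(\text{unknot})=1$, $q^{-1}V_{L_+}-qV_{L_-}=(q^{1/2}-q^{-1/2})V_{L_0}$, as a Laurent polynomial in $s=q^{-1/2}$. Conventions: closures of $\alpha x_i^{e+2}\gamma$, $\alpha x_i^{e+1}\gamma$, $\alpha x_i^{e}\gamma$ play the roles of $L_-,L_0,L_+$ (e.g. the closure of $x_1^2\in\mathcal B_2$ has Jones polynomial $-s-s^5$). For a nonzero Laurent polynomial $f=a_qs^q+\dots+a_ps^p$ with $a_q,a_p\neq0$, $\mathrm{ord} f=q$. *)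

theory Defs
  imports "HOL-Computational_Algebra.Formal_Laurent_Series"
begin

(* A braid word in B_n: a list of letters (i, eps), standing for x_i^eps with
   1 <= i <= n-1 and eps in {1,-1}. *)
type_synonym braid_word = "(nat \<times> int) list"

definition power_word :: "nat \<Rightarrow> (nat \<Rightarrow> nat) \<Rightarrow> (nat \<Rightarrow> int) \<Rightarrow> braid_word" where
  "power_word k i a = concat (map (\<lambda>h. replicate (nat \<bar>a h\<bar>) (i h, sgn (a h))) [0..<k])"

(* Kauffman state model for the closure of a braid word w in B_n.
   Each crossing (position p) is smoothed either vertically (identity) or
   horizontally (cup-cap e_i, when p \<in> S).  The points of the closed diagram are
   (level, strand) with levels taken mod the word length (the closure). *)
definition closure_points :: "nat \<Rightarrow> braid_word \<Rightarrow> (nat \<times> nat) set" where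
  "closure_points n w = {..<max 1 (length w)} \<times> {..<n}"

definition smoothing_edges :: "nat \<Rightarrow> braid_word \<Rightarrow> nat set \<Rightarrow> ((nat \<times> nat) \<times> (nat \<times> nat)) set" where
  "smoothing_edges n w S =
     (\<Union>p<length w.
        (let i = fst (w ! p); q = Suc p mod length w in
         if p \<in> S then
           {((p, k), (q, k)) | k. k < n \<and> k \<noteq> i - 1 \<and> k \<noteq> i}
           \<union> {((p, i - 1), (p, i)), ((q, i - 1), (q, i))}
         else {((p, k), (q, k)) | k. k < n}))"

definition state_loops :: "nat \<Rightarrow> braid_word \<Rightarrow> nat set \<Rightarrow> nat" where
  "state_loops n w S =
     card (closure_points n w // ((smoothing_edges n w S \<union> (smoothing_edges n w S)\<inverse>)\<^sup>*))"

(* Jones polynomial of the closure of w in B_n, as a Laurent polynomial in s = q^(-1/2).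
   This is the Kauffman bracket formula V = (-A^3)^(-writhe) <D>, loop value
   d = -A^2 - A^(-2), normalised by <unknot> = 1, rewritten in s = A^2.
   Convention (matching the paper): x_i is a negative crossing (writhe -1);
   for a letter x_i^eps the identity smoothing has weight A^(-eps), the cup-cap
   smoothing weight A^eps.  Combining with the writhe factor, each letter
   contributes s^eps (identity) or s^(2 eps) (cup-cap), times an overall sign
   (-1)^(length w).  (Check: closure of x_1 in B_2 gives 1, of x_1^2 gives -s-s^5.) *)
definition jones :: "nat \<Rightarrow> braid_word \<Rightarrow> int fls" where
  "jones n w =
     (-1) ^ length w *
     (\<Sum>S\<in>Pow {..<length w}.
        (\<Prod>p<length w. fls_X_intpow (if p \<in> S then 2 * snd (w ! p) else snd (w ! p)))
        * (- (fls_X + fls_X_inv)) ^ (state_loops n w S - 1))"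

abbreviation ord_fls :: "int fls \<Rightarrow> int" where
  "ord_fls f \<equiv> fls_subdegree f"

end

theory Submission
  imports Defs "HOL-Computational_Algebra.Polynomial_FPS"
begin

text \<open>Expand the Kauffman state sum of the closure along the last letter of the varying power
  \<open>x\<^sub>i\<^sup>e\<close>, moved to the end of the word by cyclic invariance. Smoothing that letter vertically
  deletes it. When it is smoothed by a cup-cap, an adjacent vertically smoothed \<open>x\<^sub>i\<close> can be
  deleted and an adjacent cup-cap \<open>x\<^sub>i\<close> encloses one extra circle, so this part is
  \<open>s\<^sup>3\<^sup>e\<^sup>+\<^sup>2 Q\<close> with \<open>Q\<close> independent of \<open>e\<close>. Hence \<open>V(e+1) = -(s V(e) + s\<^sup>3\<^sup>e\<^sup>+\<^sup>2 Q)\<close>, and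
  eliminating \<open>Q\<close> gives \<open>V(e+2) = (s\<^sup>3 - s) V(e+1) + s\<^sup>4 V(e)\<close>. The coefficients have order at
  least 1 and 2, so the order rises by at least one per step. Finally \<open>V(e) \<noteq> 0\<close>, since at a
  primitive cube root of unity the state sum evaluates to 1.\<close>

section \<open>Connected components of a graph\<close>

abbreviation conn :: "'a rel \<Rightarrow> 'a rel" where
  "conn E \<equiv> (E \<union> E\<inverse>)\<^sup>*"

lemma conn_sym: "(u, v) \<in> conn E \<Longrightarrow> (v, u) \<in> conn E"
  using sym_rtrancl[OF sym_Un_converse] by (rule symD)

lemma conn_trans: "(u, v) \<in> conn E \<Longrightarrow> (v, x) \<in> conn E \<Longrightarrow> (u, x) \<in> conn E"
  by (rule rtrancl_trans)

lemma conn_map: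
  assumes edge: "\<And>u v. (u, v) \<in> E \<Longrightarrow> (f u, f v) \<in> conn E'"
    and xy: "(x, y) \<in> conn E"
  shows "(f x, f y) \<in> conn E'"
  using xy
proof (induct rule: rtrancl_induct)
  case base
  then show ?case by (rule rtrancl_refl)
next
  case (step y z)
  from step(2) have "(f y, f z) \<in> conn E'"
    by (auto intro: edge conn_sym[OF edge])
  with step(3) show ?case by (rule rtrancl_trans)
qed

lemma conn_iff_conn_map:
  assumes fw: "\<And>u v. (u, v) \<in> E \<Longrightarrow> (f u, f v) \<in> conn E'"
    and bw: "\<And>u v. (u, v) \<in> E' \<Longrightarrow> (g u, g v) \<in> conn E"
    and gx: "(x, g (f x)) \<in> conn E" and gy: "(y, g (f y)) \<in> conn E"
  shows "(x, y) \<in> conn E \<longleftrightarrow> (f x, f y) \<in> conn E'"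
proof
  assume "(x, y) \<in> conn E"
  with fw show "(f x, f y) \<in> conn E'" by (rule conn_map)
next
  assume "(f x, f y) \<in> conn E'"
  with bw have "(g (f x), g (f y)) \<in> conn E" by (rule conn_map)
  with gx gy show "(x, y) \<in> conn E" by (meson conn_sym conn_trans)
qed

lemma conn_class_eq_iff: "conn E `` {x} = conn E `` {y} \<longleftrightarrow> (x, y) \<in> conn E"
proof -
  have "equiv UNIV (conn E)"
    by (rule equivI) (auto simp: refl_rtrancl trans_rtrancl intro: symI conn_sym)
  then show ?thesis by (simp add: equiv_class_eq_iff)
qed

lemma quotient_eq_image: "A // R = (\<lambda>x. R `` {x}) ` A"
  by (auto simp: quotient_def)

lemma card_image_eq_same_kernel:
  assumes "\<And>x y. x \<in> A \<Longrightarrow> y \<in> A \<Longrightarrow> h x = h y \<longleftrightarrow> h' x = h' y"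
  shows "card (h ` A) = card (h' ` A)"
proof -
  let ?\<phi> = "\<lambda>c. h' (inv_into A h c)"
  have "?\<phi> (h x) = h' x" if "x \<in> A" for x
    using assms that by (metis f_inv_into_f image_eqI inv_into_into)
  then have img: "?\<phi> ` (h ` A) = h' ` A" by (auto simp: image_image)
  have "inj_on ?\<phi> (h ` A)"
  proof (rule inj_onI)
    fix c d assume c: "c \<in> h ` A" and d: "d \<in> h ` A" and eq: "?\<phi> c = ?\<phi> d"
    have "inv_into A h c \<in> A" "h (inv_into A h c) = c" "inv_into A h d \<in> A" "h (inv_into A h d) = d"
      using c d by (auto intro: inv_into_into f_inv_into_f)
    then show "c = d" using assms eq by metis
  qed
  then show ?thesis using img card_image by fastforce
qed

lemma card_quotient_conn_eq:
  assumes "f ` A = B" and "\<And>x y. x \<in> A \<Longrightarrow> y \<in> A \<Longrightarrow> (x, y) \<in> conn E \<longleftrightarrow> (f x, f y) \<in> conn E'"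
  shows "card (A // conn E) = card (B // conn E')"
proof -
  have "card (A // conn E) = card ((\<lambda>x. conn E `` {x}) ` A)" by (simp add: quotient_eq_image)
  also have "\<dots> = card ((\<lambda>x. conn E' `` {f x}) ` A)"
    by (rule card_image_eq_same_kernel) (simp only: conn_class_eq_iff assms(2))
  also have "(\<lambda>x. conn E' `` {f x}) ` A = (\<lambda>y. conn E' `` {y}) ` B" using assms(1) by auto
  finally show ?thesis by (simp add: quotient_eq_image)
qed

lemma conn_class_eq_closed_set:
  assumes closed: "\<And>u v. (u, v) \<in> E \<Longrightarrow> u \<in> C \<longleftrightarrow> v \<in> C" and c: "c \<in> C"
    and connected: "\<And>c'. c' \<in> C \<Longrightarrow> (c, c') \<in> conn E"
  shows "conn E `` {c} = C"
proof
  show "conn E `` {c} \<subseteq> C"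
  proof
    fix y assume "y \<in> conn E `` {c}"
    then have "(c, y) \<in> conn E" by simp
    then show "y \<in> C"
      by (induct rule: rtrancl_induct) (use c closed in blast)+
  qed
  show "C \<subseteq> conn E `` {c}" using connected by auto
qed

lemma card_quotient_remove_class:
  assumes "finite A" and "C \<subseteq> A" and "c \<in> C" and cls: "conn E `` {c} = C"
  shows "card (A // conn E) = Suc (card ((A - C) // conn E))"
proof -
  have "conn E `` {x} = C" if "x \<in> C" for x
    using that cls conn_class_eq_iff by (metis Image_singleton_iff)
  then have "A // conn E = insert C ((A - C) // conn E)"
    using assms(2,3) unfolding quotient_eq_image by blast
  moreover have "C \<notin> (A - C) // conn E"
    using cls by (auto simp: quotient_eq_image)
  moreover have "finite ((A - C) // conn E)" using assms(1) by (simp add: quotient_eq_image)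
  ultimately show ?thesis by simp
qed

section \<open>The state graph of a braid closure\<close>

definition crossing_edges :: "nat \<Rightarrow> nat \<Rightarrow> nat \<Rightarrow> nat \<Rightarrow> bool \<Rightarrow> ((nat \<times> nat) \<times> (nat \<times> nat)) set" where
  "crossing_edges n i p q cupcap =
     (if cupcap then {((p, k), (q, k)) | k. k < n \<and> k \<noteq> i - 1 \<and> k \<noteq> i}
                     \<union> {((p, i - 1), (p, i)), ((q, i - 1), (q, i))}
      else {((p, k), (q, k)) | k. k < n})"

lemma smoothing_edges_conv_crossing_edges:
  "smoothing_edges n w S = (\<Union>p<length w. crossing_edges n (fst (w ! p)) p (Suc p mod length w) (p \<in> S))"
  by (simp add: smoothing_edges_def crossing_edges_def Let_def)

lemma smoothing_edgesE:
  assumes "(u, v) \<in> smoothing_edges n w S"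
  obtains p where "p < length w" "(u, v) \<in> crossing_edges n (fst (w ! p)) p (Suc p mod length w) (p \<in> S)"
  using assms by (auto simp: smoothing_edges_conv_crossing_edges)

lemma crossing_edges_in_conn_smoothing_edges:
  assumes "p < length w" "fst (w ! p) = i" "q = Suc p mod length w" "cupcap = (p \<in> S)"
  shows "crossing_edges n i p q cupcap \<subseteq> conn (smoothing_edges n w S)"
  using assms by (auto simp: smoothing_edges_conv_crossing_edges)

lemma crossing_edges_vertical_mem:
  "k < n \<Longrightarrow> \<not> cupcap \<or> (k \<noteq> i - 1 \<and> k \<noteq> i) \<Longrightarrow> ((p, k), (q, k)) \<in> crossing_edges n i p q cupcap"
  by (auto simp: crossing_edges_def)

lemma crossing_edges_cup_mem: "((p, i - 1), (p, i)) \<in> crossing_edges n i p q True"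
  by (simp add: crossing_edges_def)

lemma crossing_edges_cap_mem: "((q, i - 1), (q, i)) \<in> crossing_edges n i p q True"
  by (simp add: crossing_edges_def)

lemma crossing_edges_cupcapE:
  assumes "x \<in> crossing_edges n i p q True"
  obtains (vertical) k where "k < n" "k \<noteq> i - 1" "k \<noteq> i" "x = ((p, k), (q, k))"
    | (cup) "x = ((p, i - 1), (p, i))" | (cap) "x = ((q, i - 1), (q, i))"
  using assms by (auto simp: crossing_edges_def)

lemma crossing_edges_loop_vertical: "crossing_edges n i p p False \<subseteq> conn E"
  by (auto simp: crossing_edges_def)

lemma crossing_edges_loop_cupcap:
  "((p, i - 1), (p, i)) \<in> conn E \<Longrightarrow> crossing_edges n i p p True \<subseteq> conn E"
  by (auto simp: crossing_edges_def)

lemma crossing_edges_conn_compose_vertical: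
  assumes A: "crossing_edges n i p m cupcap \<subseteq> conn E" and B: "crossing_edges n i' m q False \<subseteq> conn E"
    and i: "i - 1 < n" "i < n"
  shows "crossing_edges n i p q cupcap \<subseteq> conn E"
proof
  fix x assume x: "x \<in> crossing_edges n i p q cupcap"
  have down: "((m, k), (q, k)) \<in> conn E" if "k < n" for k
    using B crossing_edges_vertical_mem[OF that] by blast
  show "x \<in> conn E"
  proof (cases cupcap)
    case False
    with x obtain k where k: "k < n" "x = ((p, k), (q, k))" by (auto simp: crossing_edges_def)
    have "((p, k), (m, k)) \<in> conn E" using A crossing_edges_vertical_mem[of k n cupcap] k False by blast
    with down[OF k(1)] k show ?thesis by (auto intro: conn_trans)
  next
    case True
    have A': "crossing_edges n i p m True \<subseteq> conn E" using A True by simp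
    have cap_m: "((m, i - 1), (m, i)) \<in> conn E" using A' crossing_edges_cap_mem by blast
    from x True have "x \<in> crossing_edges n i p q True" by simp
    then show ?thesis
    proof (cases rule: crossing_edges_cupcapE)
      case (vertical k)
      have "((p, k), (m, k)) \<in> conn E" using A crossing_edges_vertical_mem[of k n] vertical True by blast
      with down[OF vertical(1)] vertical show ?thesis by (auto intro: conn_trans)
    next
      case cup
      then show ?thesis using A' crossing_edges_cup_mem by blast
    next
      case cap
      have "((q, i - 1), (q, i)) \<in> conn E"
        using conn_trans[OF conn_sym[OF down[OF i(1)]] conn_trans[OF cap_m down[OF i(2)]]] .
      then show ?thesis using cap by simp
    qed
  qed
qed

lemma crossing_edges_conn_compose_cupcap:
  assumes A: "crossing_edges n i p m True \<subseteq> conn E" and B: "crossing_edges n i m q True \<subseteq> conn E"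
  shows "crossing_edges n i p q True \<subseteq> conn E"
proof
  fix x assume "x \<in> crossing_edges n i p q True"
  then show "x \<in> conn E"
  proof (cases rule: crossing_edges_cupcapE)
    case (vertical k)
    have "((p, k), (m, k)) \<in> conn E" "((m, k), (q, k)) \<in> conn E"
      using A B crossing_edges_vertical_mem[of k n True] vertical by blast+
    then show ?thesis using vertical by (auto intro: conn_trans)
  next
    case cup
    then show ?thesis using A crossing_edges_cup_mem by blast
  next
    case cap
    then show ?thesis using B crossing_edges_cap_mem by blast
  qed
qed

definition relevel :: "(nat \<Rightarrow> nat) \<Rightarrow> nat \<times> nat \<Rightarrow> nat \<times> nat" where
  "relevel h x = (h (fst x), snd x)"

lemma relevel_edge_conn:
  assumes "(u, v) \<in> crossing_edges n i p q cupcap" and "crossing_edges n i (h p) (h q) cupcap \<subseteq> conn E"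
  shows "(relevel h u, relevel h v) \<in> conn E"
  using assms by (auto simp: crossing_edges_def relevel_def split: if_splits)

lemma state_loops_eq_relevel:
  assumes img: "relevel h ` closure_points n W = closure_points n W'"
    and fw: "\<And>u v. (u, v) \<in> smoothing_edges n W S \<Longrightarrow> (relevel h u, relevel h v) \<in> conn (smoothing_edges n W' S')"
    and bw: "\<And>u v. (u, v) \<in> smoothing_edges n W' S' \<Longrightarrow> (g u, g v) \<in> conn (smoothing_edges n W S)"
    and round_trip: "\<And>x. x \<in> closure_points n W \<Longrightarrow> (x, g (relevel h x)) \<in> conn (smoothing_edges n W S)"
  shows "state_loops n W S = state_loops n W' S'"
  unfolding state_loops_def
proof (rule card_quotient_conn_eq[OF img])
  fix x y assume x: "x \<in> closure_points n W" and y: "y \<in> closure_points n W"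
  show "(x, y) \<in> conn (smoothing_edges n W S) \<longleftrightarrow> (relevel h x, relevel h y) \<in> conn (smoothing_edges n W' S')"
    by (rule conn_iff_conn_map[OF fw bw round_trip[OF x] round_trip[OF y]])
qed

definition is_braid_word :: "nat \<Rightarrow> braid_word \<Rightarrow> bool" where
  "is_braid_word n w \<longleftrightarrow> (\<forall>x\<in>set w. 1 \<le> fst x \<and> fst x < n)"

lemma is_braid_word_append [simp]: "is_braid_word n (x @ y) \<longleftrightarrow> is_braid_word n x \<and> is_braid_word n y"
  by (auto simp: is_braid_word_def)

lemma is_braid_word_Cons [simp]: "is_braid_word n (a # y) \<longleftrightarrow> 1 \<le> fst a \<and> fst a < n \<and> is_braid_word n y"
  by (auto simp: is_braid_word_def)

lemma is_braid_word_Nil [simp]: "is_braid_word n []"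
  by (simp add: is_braid_word_def)

lemma is_braid_word_replicate: "1 \<le> fst a \<Longrightarrow> fst a < n \<Longrightarrow> is_braid_word n (replicate m a)"
  by (auto simp: is_braid_word_def)

lemma is_braid_word_nth: "is_braid_word n w \<Longrightarrow> p < length w \<Longrightarrow> fst (w ! p) - 1 < n \<and> fst (w ! p) < n"
  unfolding is_braid_word_def using nth_mem by fastforce

lemma state_loops_map_fst_eq:
  assumes "map fst w = map fst w'"
  shows "state_loops n w S = state_loops n w' S"
proof -
  have l: "length w = length w'" using assms by (rule map_eq_imp_length_eq)
  then have "\<And>p. p < length w \<Longrightarrow> fst (w ! p) = fst (w' ! p)" using assms by (metis nth_map)
  with l have "smoothing_edges n w S = smoothing_edges n w' S"
    unfolding smoothing_edges_conv_crossing_edges by (intro SUP_cong) auto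
  with l show ?thesis by (simp add: state_loops_def closure_points_def)
qed

lemma state_loops_pos:
  assumes "1 \<le> n" shows "1 \<le> state_loops n w S"
proof -
  have "(0, 0) \<in> closure_points n w" using assms by (simp add: closure_points_def)
  then have "closure_points n w // conn (smoothing_edges n w S) \<noteq> {}" by (auto simp: quotient_eq_image)
  moreover have "finite (closure_points n w // conn (smoothing_edges n w S))"
    by (simp add: quotient_eq_image closure_points_def)
  ultimately show ?thesis unfolding state_loops_def by (simp add: Suc_le_eq card_gt_0_iff)
qed

section \<open>Moves on states that change the loop count predictably\<close>

lemma state_loops_snoc_vertical:
  assumes wf: "is_braid_word n w" and notin: "length w \<notin> S"
  shows "state_loops n (w @ [l]) S = state_loops n w S"
proof -
  define N where "N = length w"
  define h where "h = (\<lambda>x::nat. if x = N then 0 else x)"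
  let ?W = "w @ [l]"
  have lW: "length ?W = Suc N" by (simp add: N_def)
  have last: "crossing_edges n (fst (?W ! N)) N 0 False \<subseteq> conn (smoothing_edges n ?W S)"
    by (rule crossing_edges_in_conn_smoothing_edges) (use notin lW in \<open>auto simp: N_def\<close>)
  have img: "relevel h ` closure_points n ?W = closure_points n w"
    by (force simp: closure_points_def N_def[symmetric] h_def relevel_def image_iff)
  show ?thesis
  proof (rule state_loops_eq_relevel[OF img, where g = id])
    fix u v assume "(u, v) \<in> smoothing_edges n ?W S"
    then obtain p where p: "p < length ?W"
      and uv: "(u, v) \<in> crossing_edges n (fst (?W ! p)) p (Suc p mod length ?W) (p \<in> S)"
      by (rule smoothing_edgesE)
    show "(relevel h u, relevel h v) \<in> conn (smoothing_edges n w S)"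
    proof (rule relevel_edge_conn[OF uv])
      show "crossing_edges n (fst (?W ! p)) (h p) (h (Suc p mod length ?W)) (p \<in> S) \<subseteq> conn (smoothing_edges n w S)"
      proof (cases "p < N")
        case True
        then have "crossing_edges n (fst (w ! p)) p (Suc p mod length w) (p \<in> S) \<subseteq> conn (smoothing_edges n w S)"
          by (intro crossing_edges_in_conn_smoothing_edges) (auto simp: N_def)
        then show ?thesis using True by (auto simp: lW h_def N_def nth_append)
      next
        case False
        with p lW have "p = N" by simp
        with notin show ?thesis by (simp add: lW h_def crossing_edges_loop_vertical N_def[symmetric])
      qed
    qed
  next
    fix u v assume "(u, v) \<in> smoothing_edges n w S"
    then obtain p where p: "p < length w"
      and uv: "(u, v) \<in> crossing_edges n (fst (w ! p)) p (Suc p mod length w) (p \<in> S)"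
      by (rule smoothing_edgesE)
    have Wp: "?W ! p = w ! p" using p by (simp add: nth_append)
    have "crossing_edges n (fst (w ! p)) p (Suc p mod length w) (p \<in> S) \<subseteq> conn (smoothing_edges n ?W S)"
    proof (cases "Suc p < N")
      case True
      show ?thesis by (rule crossing_edges_in_conn_smoothing_edges) (use True p Wp in \<open>auto simp: N_def\<close>)
    next
      case False
      with p have sp: "Suc p = N" by (simp add: N_def)
      have "crossing_edges n (fst (w ! p)) p N (p \<in> S) \<subseteq> conn (smoothing_edges n ?W S)"
        by (rule crossing_edges_in_conn_smoothing_edges) (use sp p Wp lW in auto)
      from crossing_edges_conn_compose_vertical[OF this last is_braid_word_nth[OF wf p, THEN conjunct1]
          is_braid_word_nth[OF wf p, THEN conjunct2]]
      show ?thesis using sp by (simp add: N_def)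
    qed
    then show "(id u, id v) \<in> conn (smoothing_edges n ?W S)" using uv by auto
  next
    fix x assume x: "x \<in> closure_points n ?W"
    show "(x, id (relevel h x)) \<in> conn (smoothing_edges n ?W S)"
    proof (cases "fst x = N")
      case True
      have "snd x < n" using x by (auto simp: closure_points_def)
      then have "((N, snd x), (0, snd x)) \<in> crossing_edges n (fst (?W ! N)) N 0 False"
        by (rule crossing_edges_vertical_mem) simp
      then show ?thesis using last True by (auto simp: relevel_def h_def)
    qed (simp add: relevel_def h_def)
  qed
qed

text \<open>Cyclic relabelling of levels: the first letter of a word becomes the last one.\<close>

definition cyc_pred :: "nat \<Rightarrow> nat \<Rightarrow> nat" where
  "cyc_pred N x = (if x = 0 then N else x - 1)"

definition cyc_succ :: "nat \<Rightarrow> nat \<Rightarrow> nat" where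
  "cyc_succ N x = (if x = N then 0 else Suc x)"

lemma cyc_pred_lt: "x < Suc N \<Longrightarrow> cyc_pred N x < Suc N"
  by (auto simp: cyc_pred_def)

lemma cyc_succ_lt: "x < Suc N \<Longrightarrow> cyc_succ N x < Suc N"
  by (auto simp: cyc_succ_def)

lemma cyc_succ_cyc_pred: "x < Suc N \<Longrightarrow> cyc_succ N (cyc_pred N x) = x"
  by (auto simp: cyc_pred_def cyc_succ_def)

lemma cyc_pred_cyc_succ: "x < Suc N \<Longrightarrow> cyc_pred N (cyc_succ N x) = x"
  by (auto simp: cyc_pred_def cyc_succ_def)

lemma cyc_pred_Suc_mod: "p < Suc N \<Longrightarrow> cyc_pred N (Suc p mod Suc N) = Suc (cyc_pred N p) mod Suc N"
  by (auto simp: cyc_pred_def mod_Suc)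

lemma cyc_succ_Suc_mod: "p < Suc N \<Longrightarrow> cyc_succ N (Suc p mod Suc N) = Suc (cyc_succ N p) mod Suc N"
  by (auto simp: cyc_succ_def mod_Suc)

lemma nth_snoc_cyc_pred: "p < Suc (length w) \<Longrightarrow> (w @ [a]) ! cyc_pred (length w) p = (a # w) ! p"
  by (auto simp: cyc_pred_def nth_append nth_Cons')

lemma nth_Cons_cyc_succ: "p < Suc (length w) \<Longrightarrow> (a # w) ! cyc_succ (length w) p = (w @ [a]) ! p"
  by (auto simp: cyc_succ_def nth_append)

lemma inj_on_cyc_pred: "inj_on (cyc_pred N) {..<Suc N}"
  by (rule inj_on_inverseI[where g = "cyc_succ N"]) (simp add: cyc_succ_cyc_pred)

lemma cyc_pred_image: "cyc_pred N ` {..<Suc N} = {..<Suc N}"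
  using cyc_pred_lt cyc_succ_lt cyc_pred_cyc_succ by (metis lessThan_iff subsetI subset_antisym image_eqI image_subsetI)

lemma cyc_pred_mem_image_iff: "S \<subseteq> {..<Suc N} \<Longrightarrow> p < Suc N \<Longrightarrow> cyc_pred N p \<in> cyc_pred N ` S \<longleftrightarrow> p \<in> S"
  using inj_on_cyc_pred[of N] by (auto simp: inj_on_def)

lemma state_loops_rotate:
  assumes S: "S \<subseteq> {..<Suc (length w)}"
  shows "state_loops n (a # w) S = state_loops n (w @ [a]) (cyc_pred (length w) ` S)"
proof -
  define N where "N = length w"
  let ?W = "a # w" and ?W' = "w @ [a]" and ?S' = "cyc_pred N ` S"
  have lW: "length ?W = Suc N" "length ?W' = Suc N" by (simp_all add: N_def)
  have mem: "cyc_pred N p \<in> ?S' \<longleftrightarrow> p \<in> S" if "p < Suc N" for p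
    using cyc_pred_mem_image_iff[OF S[folded N_def] that] .
  have mem': "p \<in> ?S' \<longleftrightarrow> cyc_succ N p \<in> S" if "p < Suc N" for p
    using mem[OF cyc_succ_lt[OF that]] cyc_pred_cyc_succ[OF that] by simp
  have img: "relevel (cyc_pred N) ` closure_points n ?W = closure_points n ?W'"
  proof (rule set_eqI, rule iffI)
    fix x assume "x \<in> relevel (cyc_pred N) ` closure_points n ?W"
    then show "x \<in> closure_points n ?W'" using cyc_pred_lt by (auto simp: closure_points_def lW relevel_def N_def)
  next
    fix x assume "x \<in> closure_points n ?W'"
    then have "(cyc_succ N (fst x), snd x) \<in> closure_points n ?W"
      and "relevel (cyc_pred N) (cyc_succ N (fst x), snd x) = x"
      using cyc_succ_lt cyc_pred_cyc_succ by (auto simp: closure_points_def lW relevel_def N_def)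
    then show "x \<in> relevel (cyc_pred N) ` closure_points n ?W" by (metis image_eqI)
  qed
  show ?thesis unfolding N_def[symmetric]
  proof (rule state_loops_eq_relevel[OF img, where g = "relevel (cyc_succ N)"])
    fix u v assume "(u, v) \<in> smoothing_edges n ?W S"
    then obtain p where p: "p < Suc N"
      and uv: "(u, v) \<in> crossing_edges n (fst (?W ! p)) p (Suc p mod Suc N) (p \<in> S)"
      by (rule smoothing_edgesE) (auto simp: N_def)
    have "crossing_edges n (fst (?W' ! cyc_pred N p)) (cyc_pred N p) (Suc (cyc_pred N p) mod Suc N)
        (cyc_pred N p \<in> ?S') \<subseteq> conn (smoothing_edges n ?W' ?S')"
      by (rule crossing_edges_in_conn_smoothing_edges) (use cyc_pred_lt[OF p] lW in auto)
    then show "(relevel (cyc_pred N) u, relevel (cyc_pred N) v) \<in> conn (smoothing_edges n ?W' ?S')"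
      using nth_snoc_cyc_pred[of p w a] cyc_pred_Suc_mod[OF p] mem[OF p] p
      by (intro relevel_edge_conn[OF uv]) (simp add: N_def)
  next
    fix u v assume "(u, v) \<in> smoothing_edges n ?W' ?S'"
    then obtain p where p: "p < Suc N"
      and uv: "(u, v) \<in> crossing_edges n (fst (?W' ! p)) p (Suc p mod Suc N) (p \<in> ?S')"
      by (rule smoothing_edgesE) (auto simp: N_def)
    have "crossing_edges n (fst (?W ! cyc_succ N p)) (cyc_succ N p) (Suc (cyc_succ N p) mod Suc N)
        (cyc_succ N p \<in> S) \<subseteq> conn (smoothing_edges n ?W S)"
      by (rule crossing_edges_in_conn_smoothing_edges) (use cyc_succ_lt[OF p] lW in auto)
    then show "(relevel (cyc_succ N) u, relevel (cyc_succ N) v) \<in> conn (smoothing_edges n ?W S)"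
      using nth_Cons_cyc_succ[of p w a] cyc_succ_Suc_mod[OF p] mem'[OF p] p
      by (intro relevel_edge_conn[OF uv]) (simp add: N_def)
  next
    fix x assume "x \<in> closure_points n ?W"
    then have "fst x < Suc N" by (auto simp: closure_points_def N_def)
    then show "(x, relevel (cyc_succ N) (relevel (cyc_pred N) x)) \<in> conn (smoothing_edges n ?W S)"
      by (simp add: relevel_def cyc_succ_cyc_pred)
  qed
qed

text \<open>Rotate the vertically smoothed letter \<open>a\<close> to the end, delete it, and rotate back.\<close>

lemma state_loops_vertical_before_cupcap:
  assumes wf: "is_braid_word n (w @ [a, b])" and S: "S \<subseteq> {..<length w}"
  shows "state_loops n (w @ [a, b]) (insert (Suc (length w)) S) = state_loops n (w @ [b]) (insert (length w) S)"
proof -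
  let ?N = "length w" and ?T = "insert 0 (Suc ` S)"
  have T: "?T \<subseteq> {..<Suc (Suc ?N)}" using S by auto
  have rot1: "cyc_pred (Suc ?N) ` ?T = insert (Suc ?N) S" and rot2: "cyc_pred ?N ` ?T = insert ?N S"
    by (force simp: cyc_pred_def)+
  have "state_loops n (w @ [a, b]) (insert (Suc ?N) S) = state_loops n (b # (w @ [a])) ?T"
    using state_loops_rotate[of ?T "w @ [a]" n b] T rot1 by simp
  also have "\<dots> = state_loops n (b # w) ?T"
    using state_loops_snoc_vertical[of n "b # w" ?T a] wf S by auto
  also have "\<dots> = state_loops n (w @ [b]) (insert ?N S)"
    using state_loops_rotate[of ?T w n b] S rot2 by auto
  finally show ?thesis .
qed

text \<open>Two consecutive cup-cap smoothings of the same generator enclose a small circle: the cap of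
  the first and the cup of the second. Removing it leaves one cup-cap smoothing.\<close>

lemma cupcap_pair_circle:
  fixes n :: nat
  assumes ab: "fst a = fst b" and S: "S \<subseteq> {..<length w}"
  defines "E \<equiv> smoothing_edges n (w @ [a, b]) (insert (length w) (insert (Suc (length w)) S))"
  shows "conn E `` {(Suc (length w), fst a - 1)} = {(Suc (length w), fst a - 1), (Suc (length w), fst a)}"
proof (rule conn_class_eq_closed_set)
  let ?N = "length w" and ?W = "w @ [a, b]" and ?C = "{(Suc (length w), fst a - 1), (Suc (length w), fst a)}"
  fix u v assume "(u, v) \<in> E"
  then obtain p where p: "p < Suc (Suc ?N)"
    and uv: "(u, v) \<in> crossing_edges n (fst (?W ! p)) p (Suc p mod Suc (Suc ?N))
      (p \<in> insert ?N (insert (Suc ?N) S))"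
    unfolding E_def by (rule smoothing_edgesE) simp
  consider "p < ?N" | "p = ?N" | "p = Suc ?N" using p by linarith
  then show "u \<in> ?C \<longleftrightarrow> v \<in> ?C"
  proof cases
    case 1
    then have "fst u \<noteq> Suc ?N" "fst v \<noteq> Suc ?N"
      using uv by (auto simp: crossing_edges_def split: if_splits)
    then show ?thesis by auto
  next
    case 2
    then have "(u, v) \<in> crossing_edges n (fst a) ?N (Suc ?N) True" using uv by (simp add: nth_append)
    then show ?thesis by (auto simp: crossing_edges_def)
  next
    case 3
    then have "(u, v) \<in> crossing_edges n (fst a) (Suc ?N) 0 True" using uv by (simp add: nth_append ab)
    then show ?thesis by (auto simp: crossing_edges_def)
  qed
next
  have "crossing_edges n (fst a) (Suc (length w)) 0 True \<subseteq> conn E"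
    unfolding E_def by (rule crossing_edges_in_conn_smoothing_edges) (auto simp: nth_append ab)
  then have "((Suc (length w), fst a - 1), (Suc (length w), fst a)) \<in> conn E"
    using crossing_edges_cup_mem by blast
  then show "((Suc (length w), fst a - 1), c') \<in> conn E"
    if "c' \<in> {(Suc (length w), fst a - 1), (Suc (length w), fst a)}" for c'
    using that by auto
qed simp

lemma state_loops_cupcap_pair:
  assumes wf: "is_braid_word n (w @ [a, b])" and ab: "fst a = fst b" and S: "S \<subseteq> {..<length w}"
  shows "state_loops n (w @ [a, b]) (insert (length w) (insert (Suc (length w)) S))
       = Suc (state_loops n (w @ [a]) (insert (length w) S))"
proof -
  define N where "N = length w"
  define i where "i = fst a"
  define h where "h = (\<lambda>x::nat. if x = Suc N then 0 else x)"
  let ?W = "w @ [a, b]" and ?W' = "w @ [a]" and ?S = "insert N (insert (Suc N) S)" and ?S' = "insert N S"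
  let ?E = "smoothing_edges n ?W ?S" and ?E' = "smoothing_edges n ?W' ?S'"
  define A where "A = closure_points n ?W"
  define C where "C = {(Suc N, i - 1), (Suc N, i)}"
  have lW: "length ?W = Suc (Suc N)" "length ?W' = Suc N" by (simp_all add: N_def)
  have SN: "p < N" if "p \<in> S" for p using S that by (auto simp: N_def)
  have i: "i - 1 < n" "i < n"
    using is_braid_word_nth[OF wf, of N] by (simp_all add: lW nth_append N_def i_def)
  have first: "crossing_edges n i N (Suc N) True \<subseteq> conn ?E"
    by (rule crossing_edges_in_conn_smoothing_edges) (use SN in \<open>auto simp: nth_append N_def i_def\<close>)
  have second: "crossing_edges n i (Suc N) 0 True \<subseteq> conn ?E"
    by (rule crossing_edges_in_conn_smoothing_edges) (auto simp: nth_append N_def i_def ab)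
  have last': "crossing_edges n i N 0 True \<subseteq> conn ?E'"
    by (rule crossing_edges_in_conn_smoothing_edges) (auto simp: nth_append N_def i_def)
  have circle: "conn ?E `` {(Suc N, i - 1)} = C"
    using cupcap_pair_circle[OF ab S] by (simp add: C_def N_def i_def)
  have "C \<subseteq> A" using i by (auto simp: A_def C_def closure_points_def N_def)
  then have remove: "card (A // conn ?E) = Suc (card ((A - C) // conn ?E))"
    by (intro card_quotient_remove_class[OF _ _ _ circle]) (auto simp: A_def closure_points_def C_def)
  have img: "relevel h ` (A - C) = closure_points n ?W'"
  proof (rule set_eqI, rule iffI)
    fix x assume "x \<in> relevel h ` (A - C)"
    then show "x \<in> closure_points n ?W'" by (auto simp: A_def closure_points_def N_def[symmetric] h_def relevel_def)
  next
    fix x assume "x \<in> closure_points n ?W'"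
    then have "x \<in> A - C" "relevel h x = x"
      by (auto simp: A_def C_def closure_points_def N_def[symmetric] h_def relevel_def)
    then show "x \<in> relevel h ` (A - C)" by (metis image_eqI)
  qed
  have round_trip: "(x, id (relevel h x)) \<in> conn ?E" if x: "x \<in> A - C" for x
  proof (cases "fst x = Suc N")
    case True
    have "snd x < n" "snd x \<noteq> i - 1" "snd x \<noteq> i" using x True by (auto simp: A_def C_def closure_points_def)
    then have "((Suc N, snd x), (0, snd x)) \<in> crossing_edges n i (Suc N) 0 True"
      by (auto simp: crossing_edges_def)
    then have "((Suc N, snd x), (0, snd x)) \<in> conn ?E" using second by blast
    moreover have "x = (Suc N, snd x)" using True by (metis prod.collapse)
    ultimately show ?thesis using True by (simp add: relevel_def h_def)
  qed (simp add: relevel_def h_def)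
  have fw: "(relevel h u, relevel h v) \<in> conn ?E'" if "(u, v) \<in> ?E" for u v
  proof -
    from that obtain p where p: "p < length ?W"
      and uv: "(u, v) \<in> crossing_edges n (fst (?W ! p)) p (Suc p mod length ?W) (p \<in> ?S)"
      by (rule smoothing_edgesE)
    show ?thesis
    proof (rule relevel_edge_conn[OF uv])
      consider "p < N" | "p = N" | "p = Suc N" using p lW by linarith
      then show "crossing_edges n (fst (?W ! p)) (h p) (h (Suc p mod length ?W)) (p \<in> ?S) \<subseteq> conn ?E'"
      proof cases
        case 1
        then have "crossing_edges n (fst (?W' ! p)) p (Suc p mod length ?W') (p \<in> ?S') \<subseteq> conn ?E'"
          by (intro crossing_edges_in_conn_smoothing_edges) (auto simp: N_def)
        then show ?thesis using 1 by (simp add: lW h_def nth_append N_def[symmetric])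
      next
        case 2
        then show ?thesis using last' by (simp add: lW h_def nth_append N_def i_def)
      next
        case 3
        have "((0, i - 1), (0, i)) \<in> conn ?E'" using last' crossing_edges_cap_mem by blast
        then have "crossing_edges n i 0 0 True \<subseteq> conn ?E'" by (rule crossing_edges_loop_cupcap)
        then show ?thesis using 3 by (simp add: lW h_def nth_append N_def i_def ab)
      qed
    qed
  qed
  have bw: "(id u, id v) \<in> conn ?E" if "(u, v) \<in> ?E'" for u v
  proof -
    from that obtain p where p: "p < length ?W'"
      and uv: "(u, v) \<in> crossing_edges n (fst (?W' ! p)) p (Suc p mod length ?W') (p \<in> ?S')"
      by (rule smoothing_edgesE)
    have "crossing_edges n (fst (?W' ! p)) p (Suc p mod length ?W') (p \<in> ?S') \<subseteq> conn ?E"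
    proof (cases "p < N")
      case True
      show ?thesis by (rule crossing_edges_in_conn_smoothing_edges) (use True in \<open>auto simp: N_def nth_append\<close>)
    next
      case False
      with p lW have "p = N" by simp
      with crossing_edges_conn_compose_cupcap[OF first second] show ?thesis
        by (simp add: lW nth_append N_def i_def)
    qed
    with uv show ?thesis by auto
  qed
  have "card ((A - C) // conn ?E) = card (closure_points n ?W' // conn ?E')"
  proof (rule card_quotient_conn_eq[OF img])
    fix x y assume x: "x \<in> A - C" and y: "y \<in> A - C"
    show "(x, y) \<in> conn ?E \<longleftrightarrow> (relevel h x, relevel h y) \<in> conn ?E'"
      by (rule conn_iff_conn_map[OF fw bw round_trip[OF x] round_trip[OF y]])
  qed
  with remove show ?thesis unfolding N_def[symmetric] state_loops_def by (simp add: A_def)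
qed

section \<open>Skein-type recursions for the state sum\<close>

text \<open>A constant rather than the abbreviation \<open>fls_X_intpow\<close>, which the simplifier would unfold
  into a shift.\<close>

definition s_pow :: "int \<Rightarrow> int fls" where
  "s_pow z = fls_X_intpow z"

lemma s_pow_add: "s_pow a * s_pow b = s_pow (a + b)"
  by (simp add: s_pow_def fls_X_intpow_times_fls_X_intpow)

lemma s_pow_0 [simp]: "s_pow 0 = 1"
  by (simp add: s_pow_def)

definition loop_value :: "int fls" where
  "loop_value = - (fls_X + fls_X_inv)"

lemma loop_value_eq: "loop_value = - (s_pow 1 + s_pow (-1))"
  by (simp add: loop_value_def s_pow_def fls_X_conv_shift_1 fls_X_inv_conv_shift_1)

lemma loop_value_absorb:
  assumes "e = 1 \<or> e = -1"
  shows "- (s_pow e + s_pow (2 * e) * loop_value) = s_pow (3 * e)"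
proof -
  have "s_pow (2 * e) * s_pow 1 = s_pow (2 * e + 1)" "s_pow (2 * e) * s_pow (-1) = s_pow (2 * e - 1)"
    by (simp_all add: s_pow_add)
  then have "- (s_pow e + s_pow (2 * e) * loop_value) = s_pow (2 * e + 1) + s_pow (2 * e - 1) - s_pow e"
    unfolding loop_value_eq distrib_left by (simp add: algebra_simps)
  then show ?thesis using assms by auto
qed

definition state_weight :: "braid_word \<Rightarrow> nat set \<Rightarrow> int fls" where
  "state_weight w S = (\<Prod>p<length w. s_pow (if p \<in> S then 2 * snd (w ! p) else snd (w ! p)))"

lemma jones_eq_state_sum:
  "jones n w = (-1) ^ length w * (\<Sum>S\<in>Pow {..<length w}. state_weight w S * loop_value ^ (state_loops n w S - 1))"
  by (simp add: jones_def state_weight_def s_pow_def loop_value_def)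

text \<open>The state sum of \<open>w x\<^sub>i\<close> restricted to the states smoothing the last crossing by a cup-cap,
  with the weight and sign of that crossing omitted: the term of the skein relation that does not
  depend on the exponent.\<close>

definition jones_cupcap :: "nat \<Rightarrow> braid_word \<Rightarrow> nat \<Rightarrow> int fls" where
  "jones_cupcap n w i = (-1) ^ length w *
     (\<Sum>S\<in>Pow {..<length w}. state_weight w S * loop_value ^ (state_loops n (w @ [(i, 1)]) (insert (length w) S) - 1))"

lemma sum_Pow_lessThan_Suc:
  "(\<Sum>S\<in>Pow {..<Suc N}. F S) = (\<Sum>S\<in>Pow {..<N}. F S) + (\<Sum>S\<in>Pow {..<N}. F (insert N S))"
proof -
  have "Pow {..<Suc N} = Pow {..<N} \<union> insert N ` Pow {..<N}"
    by (simp add: lessThan_Suc Pow_insert)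
  moreover have "Pow {..<N} \<inter> insert N ` Pow {..<N} = {}" by auto
  moreover have "inj_on (insert N) (Pow {..<N})"
    by (rule inj_onI) (auto simp: insert_ident)
  ultimately show ?thesis by (simp add: sum.union_disjoint sum.reindex)
qed

lemma state_weight_snoc:
  assumes "S \<subseteq> {..<length w}"
  shows "state_weight (w @ [l]) S = state_weight w S * s_pow (snd l)"
    and "state_weight (w @ [l]) (insert (length w) S) = state_weight w S * s_pow (2 * snd l)"
proof -
  have "(\<Prod>p<length w. s_pow (if p \<in> T then 2 * snd ((w @ [l]) ! p) else snd ((w @ [l]) ! p)))
      = state_weight w S" if "T \<inter> {..<length w} = S" for T
    unfolding state_weight_def using that by (intro prod.cong) (auto simp: nth_append)
  from this[of S] this[of "insert (length w) S"] assms show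
    "state_weight (w @ [l]) S = state_weight w S * s_pow (snd l)"
    "state_weight (w @ [l]) (insert (length w) S) = state_weight w S * s_pow (2 * snd l)"
    by (auto simp: state_weight_def)
qed

lemma jones_snoc:
  assumes "is_braid_word n w"
  shows "jones n (w @ [(i, e)]) = - (s_pow e * jones n w + s_pow (2 * e) * jones_cupcap n w i)"
proof -
  define N where "N = length w"
  let ?l = "(i, e)" and ?d = "\<lambda>m. loop_value ^ (m - 1)"
  have vertical: "(\<Sum>S\<in>Pow {..<N}. state_weight (w @ [?l]) S * ?d (state_loops n (w @ [?l]) S))
      = s_pow e * (\<Sum>S\<in>Pow {..<N}. state_weight w S * ?d (state_loops n w S))"
    unfolding sum_distrib_left
  proof (rule sum.cong)
    fix S assume "S \<in> Pow {..<N}"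
    then have S: "S \<subseteq> {..<length w}" and "length w \<notin> S" by (auto simp: N_def)
    then show "state_weight (w @ [?l]) S * ?d (state_loops n (w @ [?l]) S)
        = s_pow e * (state_weight w S * ?d (state_loops n w S))"
      using state_weight_snoc(1)[OF S, of ?l] state_loops_snoc_vertical[OF assms] by simp
  qed simp
  have cupcap: "(\<Sum>S\<in>Pow {..<N}. state_weight (w @ [?l]) (insert N S) * ?d (state_loops n (w @ [?l]) (insert N S)))
      = s_pow (2 * e) * (\<Sum>S\<in>Pow {..<N}. state_weight w S * ?d (state_loops n (w @ [(i, 1)]) (insert N S)))"
    unfolding sum_distrib_left
  proof (rule sum.cong)
    fix S assume "S \<in> Pow {..<N}"
    then have S: "S \<subseteq> {..<length w}" by (auto simp: N_def)
    have "state_loops n (w @ [?l]) (insert N S) = state_loops n (w @ [(i, 1)]) (insert N S)"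
      by (rule state_loops_map_fst_eq) simp
    then show "state_weight (w @ [?l]) (insert N S) * ?d (state_loops n (w @ [?l]) (insert N S))
        = s_pow (2 * e) * (state_weight w S * ?d (state_loops n (w @ [(i, 1)]) (insert N S)))"
      using state_weight_snoc(2)[OF S, of ?l] by (simp add: N_def)
  qed simp
  show ?thesis
    unfolding jones_eq_state_sum[of n "w @ [?l]"] length_append_singleton N_def[symmetric]
      sum_Pow_lessThan_Suc vertical cupcap
    unfolding jones_eq_state_sum[of n w] jones_cupcap_def N_def[symmetric]
    by (simp add: algebra_simps)
qed

lemma jones_cupcap_snoc:
  assumes wf: "is_braid_word n w" and i: "1 \<le> i" "i < n" and e: "e = 1 \<or> e = -1"
  shows "jones_cupcap n (w @ [(i, e)]) i = s_pow (3 * e) * jones_cupcap n w i"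
proof -
  define N where "N = length w"
  let ?l = "(i, e)" and ?c = "(i, 1::int)" and ?d = "\<lambda>m. loop_value ^ (m - 1)"
  have wf': "is_braid_word n (w @ [?l, ?c])" using wf i by simp
  define B where "B = (\<Sum>S\<in>Pow {..<N}. state_weight w S * ?d (state_loops n (w @ [?c]) (insert N S)))"
  have vertical: "(\<Sum>S\<in>Pow {..<N}. state_weight (w @ [?l]) S * ?d (state_loops n (w @ [?l, ?c]) (insert (Suc N) S)))
      = s_pow e * B"
    unfolding sum_distrib_left B_def
  proof (rule sum.cong)
    fix S assume "S \<in> Pow {..<N}"
    then have S: "S \<subseteq> {..<length w}" by (auto simp: N_def)
    show "state_weight (w @ [?l]) S * ?d (state_loops n (w @ [?l, ?c]) (insert (Suc N) S))
       = s_pow e * (state_weight w S * ?d (state_loops n (w @ [?c]) (insert N S)))"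
      using state_weight_snoc(1)[OF S, of ?l] state_loops_vertical_before_cupcap[OF wf' S]
      by (simp add: N_def)
  qed simp
  have cupcap: "(\<Sum>S\<in>Pow {..<N}. state_weight (w @ [?l]) (insert N S)
        * ?d (state_loops n (w @ [?l, ?c]) (insert (Suc N) (insert N S))))
      = s_pow (2 * e) * loop_value * B"
    unfolding sum_distrib_left B_def
  proof (rule sum.cong)
    fix S assume "S \<in> Pow {..<N}"
    then have S: "S \<subseteq> {..<length w}" by (auto simp: N_def)
    let ?k = "state_loops n (w @ [?c]) (insert N S)"
    have "state_loops n (w @ [?l, ?c]) (insert (Suc N) (insert N S))
        = Suc (state_loops n (w @ [?l]) (insert N S))"
      using state_loops_cupcap_pair[OF wf' _ S] by (simp add: N_def insert_commute)
    also have "state_loops n (w @ [?l]) (insert N S) = ?k"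
      by (rule state_loops_map_fst_eq) simp
    finally have "?d (state_loops n (w @ [?l, ?c]) (insert (Suc N) (insert N S))) = loop_value * ?d ?k"
      using state_loops_pos[of n "w @ [?c]" "insert N S"] i by (cases ?k) auto
    then show "state_weight (w @ [?l]) (insert N S) * ?d (state_loops n (w @ [?l, ?c]) (insert (Suc N) (insert N S)))
       = s_pow (2 * e) * loop_value * (state_weight w S * ?d ?k)"
      using state_weight_snoc(2)[OF S, of ?l] by (simp add: N_def algebra_simps)
  qed simp
  have "jones_cupcap n (w @ [?l]) i = (- (s_pow e + s_pow (2 * e) * loop_value)) * ((-1) ^ N * B)"
    unfolding jones_cupcap_def length_append_singleton N_def[symmetric] sum_Pow_lessThan_Suc
      append_assoc append_Cons append_Nil vertical cupcap
    by (simp add: algebra_simps)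
  then show ?thesis
    unfolding loop_value_absorb[OF e] by (simp add: jones_cupcap_def B_def N_def)
qed

lemma replicate_Suc_snoc: "c @ replicate (Suc m) x = (c @ replicate m x) @ [x]"
  by (simp add: replicate_append_same)

lemma jones_cupcap_replicate:
  assumes wf: "is_braid_word n c" and i: "1 \<le> i" "i < n" and e: "e = 1 \<or> e = -1"
  shows "jones_cupcap n (c @ replicate m (i, e)) i = s_pow (3 * e * int m) * jones_cupcap n c i"
proof (induction m)
  case (Suc m)
  have "is_braid_word n (c @ replicate m (i, e))" using wf i by (simp add: is_braid_word_replicate)
  then have "jones_cupcap n (c @ replicate (Suc m) (i, e)) i
      = s_pow (3 * e) * jones_cupcap n (c @ replicate m (i, e)) i"
    unfolding replicate_Suc_snoc by (rule jones_cupcap_snoc[OF _ i e])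
  also have "\<dots> = s_pow (3 * e * int (Suc m)) * jones_cupcap n c i"
    unfolding Suc.IH mult.assoc[symmetric] s_pow_add by (simp add: algebra_simps)
  finally show ?case .
qed simp

lemma jones_snoc_replicate:
  assumes wf: "is_braid_word n c" and i: "1 \<le> i" "i < n" and e: "e = 1 \<or> e = -1"
  shows "jones n (c @ replicate (Suc m) (i, e))
       = - (s_pow e * jones n (c @ replicate m (i, e)) + s_pow (2 * e + 3 * e * int m) * jones_cupcap n c i)"
proof -
  have "is_braid_word n (c @ replicate m (i, e))" using wf i by (simp add: is_braid_word_replicate)
  from jones_snoc[OF this, of i e] show ?thesis
    unfolding replicate_Suc_snoc jones_cupcap_replicate[OF wf i e] mult.assoc[symmetric] s_pow_add .
qed

lemma state_weight_rotate:
  assumes S: "S \<subseteq> {..<Suc (length w)}"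
  shows "state_weight (w @ [a]) (cyc_pred (length w) ` S) = state_weight (a # w) S"
proof -
  define N where "N = length w"
  let ?f = "\<lambda>p'. s_pow (if p' \<in> cyc_pred N ` S then 2 * snd ((w @ [a]) ! p') else snd ((w @ [a]) ! p'))"
  have "state_weight (w @ [a]) (cyc_pred N ` S) = prod ?f (cyc_pred N ` {..<Suc N})"
    unfolding state_weight_def cyc_pred_image by (simp add: N_def)
  also have "\<dots> = prod (?f \<circ> cyc_pred N) {..<Suc N}"
    by (rule prod.reindex[OF inj_on_cyc_pred])
  also have "\<dots> = state_weight (a # w) S"
    unfolding state_weight_def
    using cyc_pred_mem_image_iff[OF S[folded N_def]] nth_snoc_cyc_pred[of _ w a]
    by (intro prod.cong) (auto simp: N_def)
  finally show ?thesis by (simp add: N_def)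
qed

lemma jones_rotate: "jones n (a # w) = jones n (w @ [a])"
proof -
  define N where "N = length w"
  let ?G = "\<lambda>S'. state_weight (w @ [a]) S' * loop_value ^ (state_loops n (w @ [a]) S' - 1)"
  have inj: "inj_on (image (cyc_pred N)) (Pow {..<Suc N})"
    by (rule inj_on_image_Pow[OF inj_on_cyc_pred])
  have "(\<Sum>S'\<in>Pow {..<Suc N}. ?G S') = (\<Sum>S\<in>Pow {..<Suc N}. ?G (cyc_pred N ` S))"
    using sum.reindex[OF inj, of ?G] by (simp add: image_Pow_surj[OF cyc_pred_image] comp_def)
  also have "\<dots> = (\<Sum>S\<in>Pow {..<Suc N}. state_weight (a # w) S * loop_value ^ (state_loops n (a # w) S - 1))"
    using state_weight_rotate state_loops_rotate by (intro sum.cong) (auto simp: N_def)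
  finally show ?thesis unfolding jones_eq_state_sum by (simp add: N_def)
qed

lemma jones_append_commute: "jones n (x @ y) = jones n (y @ x)"
proof (induction x arbitrary: y)
  case (Cons a x)
  have "jones n ((a # x) @ y) = jones n (x @ (y @ [a]))" by (simp add: jones_rotate)
  also have "\<dots> = jones n ((y @ [a]) @ x)" by (rule Cons.IH)
  finally show ?case by simp
qed simp

lemma jones_power_step:
  assumes wf: "is_braid_word n c" and i: "1 \<le> i" "i < n"
  shows "jones n (c @ replicate (nat \<bar>e + 1\<bar>) (i, sgn (e + 1)))
       = - (s_pow 1 * jones n (c @ replicate (nat \<bar>e\<bar>) (i, sgn e)) + s_pow (3 * e + 2) * jones_cupcap n c i)"
proof (cases "e \<ge> 0")
  case True
  define m where "m = nat e"
  have e: "e = int m" using True by (simp add: m_def)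
  have "nat \<bar>e + 1\<bar> = Suc m" "sgn (e + 1) = 1" using True by (simp_all add: m_def)
  moreover have "c @ replicate (nat \<bar>e\<bar>) (i, sgn e) = c @ replicate m (i, 1)"
    using e by (cases "m = 0") auto
  ultimately show ?thesis
    using jones_snoc_replicate[OF wf i, of 1 m] by (simp add: e algebra_simps)
next
  case False
  define m where "m = nat (- e - 1)"
  define J where "J = jones n (c @ replicate m (i, -1))"
  define Q where "Q = jones_cupcap n c i"
  have e: "e = - int m - 1" using False by (simp add: m_def)
  have "jones n (c @ replicate (nat \<bar>e + 1\<bar>) (i, sgn (e + 1))) = J"
    using e by (cases "m = 0") (auto simp: J_def)
  moreover have "jones n (c @ replicate (nat \<bar>e\<bar>) (i, sgn e)) = - (s_pow (-1) * J + s_pow (-2 - 3 * int m) * Q)"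
    using jones_snoc_replicate[OF wf i, of "-1" m] False by (simp add: J_def Q_def e nat_add_distrib)
  moreover have "s_pow 1 * - (s_pow (-1) * J + s_pow (-2 - 3 * int m) * Q) = - (J + s_pow (3 * e + 2) * Q)"
    by (simp add: ring_distribs mult.assoc[symmetric] s_pow_add e)
  ultimately show ?thesis unfolding Q_def[symmetric] by simp
qed

text \<open>The term \<open>Q\<close> is eliminated by subtracting \<open>s\<^sup>3\<close> times the step at \<open>e\<close> from the step at \<open>e + 1\<close>.\<close>

lemma second_order_recurrence:
  assumes step: "\<And>e. V (e + 1) = - (s_pow 1 * V e + s_pow (3 * e + 2) * Q)"
  shows "V (e + 2) = (s_pow 3 - s_pow 1) * V (e + 1) + s_pow 4 * V e"
proof -
  have next_step: "V (e + 2) = - (s_pow 1 * V (e + 1) + s_pow (3 * e + 5) * Q)"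
    using step[of "e + 1"] by (simp add: algebra_simps)
  have "s_pow (3 * e + 5) * Q = s_pow 3 * (s_pow (3 * e + 2) * Q)"
    by (simp add: mult.assoc[symmetric] s_pow_add add.commute)
  also have "s_pow (3 * e + 2) * Q = - V (e + 1) - s_pow 1 * V e"
    using step[of e] by simp
  also have "s_pow 3 * (- V (e + 1) - s_pow 1 * V e) = - (s_pow 3 * V (e + 1)) - s_pow 4 * V e"
    by (simp add: right_diff_distrib mult.assoc[symmetric] s_pow_add)
  finally have Q_term: "s_pow (3 * e + 5) * Q = - (s_pow 3 * V (e + 1)) - s_pow 4 * V e" .
  show ?thesis unfolding next_step Q_term by (simp add: algebra_simps)
qed

section \<open>Lower bounds for the order\<close>

definition fls_zero_below :: "'a::zero fls \<Rightarrow> int \<Rightarrow> bool" where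
  "fls_zero_below f a \<longleftrightarrow> (\<forall>d<a. fls_nth f d = 0)"

lemma fls_zero_below_iff: "fls_zero_below f a \<longleftrightarrow> f = 0 \<or> a \<le> fls_subdegree f"
  by (auto simp: fls_zero_below_def intro: fls_subdegree_geI)

lemma fls_zero_below_mono: "fls_zero_below f a \<Longrightarrow> b \<le> a \<Longrightarrow> fls_zero_below f b"
  by (simp add: fls_zero_below_def)

lemma fls_zero_below_add: "fls_zero_below f a \<Longrightarrow> fls_zero_below g a \<Longrightarrow> fls_zero_below (f + g) a"
  by (simp add: fls_zero_below_def)

lemma fls_zero_below_diff:
  "fls_zero_below f a \<Longrightarrow> fls_zero_below g a \<Longrightarrow> fls_zero_below (f - g :: 'a::ab_group_add fls) a"
  by (simp add: fls_zero_below_def)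

lemma fls_zero_below_mult:
  fixes f g :: "'a::semiring_no_zero_divisors fls"
  shows "fls_zero_below f a \<Longrightarrow> fls_zero_below g b \<Longrightarrow> fls_zero_below (f * g) (a + b)"
  by (cases "f = 0 \<or> g = 0") (auto simp: fls_zero_below_iff)

lemma fls_zero_below_s_pow: "fls_zero_below (s_pow z) z"
  by (simp add: fls_zero_below_iff s_pow_def)

lemma zero_below_recurrence:
  fixes V :: "int \<Rightarrow> 'a::semiring_no_zero_divisors fls"
  assumes rec: "\<And>e. V (e + 2) = P * V (e + 1) + R * V e"
    and P: "fls_zero_below P 1" and R: "fls_zero_below R 2"
    and V0: "fls_zero_below (V e) \<mu>" and V1: "fls_zero_below (V (e + 1)) \<mu>"
  shows "fls_zero_below (V (e + int t + 1)) (\<mu> + int t) \<and> fls_zero_below (V (e + int t + 2)) (\<mu> + int t + 1)"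
proof (induction t)
  have step: "fls_zero_below (V (e' + 2)) (b + 1)"
    if "fls_zero_below (V e') (b - 1)" "fls_zero_below (V (e' + 1)) b" for e' b
    unfolding rec using fls_zero_below_mult[OF P that(2)] fls_zero_below_mult[OF R that(1)]
    by (intro fls_zero_below_add) (simp_all add: add.commute)
  {
    case 0
    have "fls_zero_below (V e) (\<mu> - 1)" using V0 by (rule fls_zero_below_mono) simp
    with V1 show ?case using step by simp
  next
    case (Suc t)
    then have "fls_zero_below (V (e + int t + 1 + 2)) (\<mu> + int t + 1 + 1)"
      by (intro step) (simp_all add: add.assoc)
    with Suc show ?case by (simp add: algebra_simps)
  }
qed

lemma subdegree_bound_of_recurrence:
  fixes V :: "int \<Rightarrow> 'a::semiring_no_zero_divisors fls"
  assumes rec: "\<And>e. V (e + 2) = P * V (e + 1) + R * V e"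
    and P: "fls_zero_below P 1" and R: "fls_zero_below R 2"
    and nz: "V (e + m) \<noteq> 0" and m: "2 \<le> m"
  shows "min (fls_subdegree (V e)) (fls_subdegree (V (e + 1))) + (m - 1) \<le> fls_subdegree (V (e + m))"
proof -
  let ?\<mu> = "min (fls_subdegree (V e)) (fls_subdegree (V (e + 1)))"
  have "fls_zero_below (V e) ?\<mu>" "fls_zero_below (V (e + 1)) ?\<mu>"
    by (simp_all add: fls_zero_below_iff)
  from zero_below_recurrence[OF rec P R this, of "nat (m - 2)", THEN conjunct2] m
  have "fls_zero_below (V (e + m)) (?\<mu> + (m - 1))"
    by (simp add: algebra_simps)
  with nz show ?thesis by (simp add: fls_zero_below_iff)
qed

lemma subdegree_bound_of_s_pow_recurrence:
  assumes rec: "\<And>e. V (e + 2) = (s_pow 3 - s_pow 1) * V (e + 1) + s_pow 4 * V e"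
    and nz: "\<And>e. V e \<noteq> 0" and m: "2 \<le> m"
  shows "min (fls_subdegree (V e)) (fls_subdegree (V (e + 1))) + (m - 1) \<le> fls_subdegree (V (e + m))"
proof (rule subdegree_bound_of_recurrence[OF rec _ _ nz m])
  show "fls_zero_below (s_pow 3 - s_pow 1) 1"
    by (rule fls_zero_below_diff[OF fls_zero_below_mono[OF fls_zero_below_s_pow] fls_zero_below_s_pow]) simp
  show "fls_zero_below (s_pow 4) 2"
    by (rule fls_zero_below_mono[OF fls_zero_below_s_pow]) simp
qed

lemma eventually_no_negative_powers:
  assumes bound: "\<And>e m. 2 \<le> m \<Longrightarrow>
      min (fls_subdegree (V e)) (fls_subdegree (V (e + 1))) + (m - 1) \<le> fls_subdegree (V (e + m))"
  shows "\<exists>E. \<forall>e\<ge>E. \<forall>d<0. fls_nth (V e) d = 0"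
proof (intro exI allI impI)
  let ?\<mu> = "min (fls_subdegree (V 0)) (fls_subdegree (V 1))"
  fix e d :: int assume e: "e \<ge> max 2 (1 - ?\<mu>)" and d: "d < 0"
  have "?\<mu> + (e - 1) \<le> fls_subdegree (V e)"
    using bound[of e 0] e by simp
  with e d have "d < fls_subdegree (V e)" by simp
  then show "fls_nth (V (e :: int)) d = 0" by simp
qed

section \<open>Non-vanishing of the Jones polynomial\<close>

text \<open>At a primitive cube root of unity \<open>\<omega>\<close> the loop value \<open>-(s + s\<^sup>-\<^sup>1)\<close> becomes \<open>1\<close> and the two
  smoothings of a crossing \<open>x\<^sub>i\<^sup>\<plusminus>\<^sup>1\<close> contribute \<open>\<omega>\<^sup>\<plusminus>\<^sup>2 + \<omega>\<^sup>\<plusminus>\<^sup>1 = -1\<close>, so the state sum of any braid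
  word evaluates to \<open>1\<close>. Evaluation is expressed as a relation, since a formal Laurent series has
  no value in general.\<close>

definition omega :: complex where
  "omega = Complex (-1/2) (sqrt 3 / 2)"

lemma omega_squared: "omega * omega = - omega - 1"
  by (simp add: omega_def complex_eq_iff field_simps)

lemma inverse_omega: "inverse omega = - omega - 1"
proof -
  have "omega * (- omega - 1) = 1" by (simp add: omega_def complex_eq_iff field_simps)
  then show ?thesis by (simp add: inverse_unique)
qed

lemma omega_nonzero: "omega \<noteq> 0"
  by (simp add: omega_def complex_eq_iff)

lemma map_poly_of_int_add: "map_poly of_int (p + q) = map_poly of_int p + (map_poly of_int q :: 'a::ring_1 poly)"
  by (rule poly_eqI) (simp add: coeff_map_poly)

lemma map_poly_of_int_uminus: "map_poly of_int (- p) = - (map_poly of_int p :: 'a::ring_1 poly)"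
  by (rule poly_eqI) (simp add: coeff_map_poly)

lemma map_poly_of_int_mult: "map_poly of_int (p * q) = map_poly of_int p * (map_poly of_int q :: 'a::comm_ring_1 poly)"
  by (rule poly_eqI) (simp add: coeff_map_poly coeff_mult)

definition omega_value :: "int fls \<Rightarrow> complex \<Rightarrow> bool" where
  "omega_value f c \<longleftrightarrow> (\<exists>N::nat. \<exists>p::int poly. f = fls_shift (int N) (fps_to_fls (fps_of_poly p))
      \<and> c = poly (map_poly of_int p) omega * inverse omega ^ N)"

lemma omega_valueE:
  assumes "omega_value f c"
  obtains N p where "f = fls_shift (int N) (fps_to_fls (fps_of_poly p))"
    "c = poly (map_poly of_int p) omega * inverse omega ^ N"
  using assms by (auto simp: omega_value_def)

lemma omega_value_mult: "omega_value f a \<Longrightarrow> omega_value g b \<Longrightarrow> omega_value (f * g) (a * b)"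
proof (elim omega_valueE)
  fix N M p q
  assume f: "f = fls_shift (int N) (fps_to_fls (fps_of_poly p))" "a = poly (map_poly of_int p) omega * inverse omega ^ N"
    and g: "g = fls_shift (int M) (fps_to_fls (fps_of_poly q))" "b = poly (map_poly of_int q) omega * inverse omega ^ M"
  have "f * g = fls_shift (int (N + M)) (fps_to_fls (fps_of_poly (p * q)))"
    by (simp add: f g fls_times_both_shifted_simp fls_times_fps_to_fls fps_of_poly_mult)
  moreover have "a * b = poly (map_poly of_int (p * q)) omega * inverse omega ^ (N + M)"
    by (simp add: f g map_poly_of_int_mult power_add)
  ultimately show ?thesis unfolding omega_value_def by blast
qed

lemma fls_shift_fps_of_poly:
  "fls_shift (- int M) (fps_to_fls (fps_of_poly (p :: int poly))) = fps_to_fls (fps_of_poly (monom 1 M * p))"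
proof -
  have "fps_to_fls (fps_of_poly (monom (1::int) M)) = fls_X ^ M"
    unfolding fps_of_poly_monom' fps_to_fls_power fps_X_to_fls by (rule refl)
  then show ?thesis by (simp add: fps_of_poly_mult fls_times_fps_to_fls fls_X_power_times_conv_shift)
qed

lemma omega_value_add: "omega_value f a \<Longrightarrow> omega_value g b \<Longrightarrow> omega_value (f + g) (a + b)"
proof (elim omega_valueE)
  fix N M p q
  assume f: "f = fls_shift (int N) (fps_to_fls (fps_of_poly p))" "a = poly (map_poly of_int p) omega * inverse omega ^ N"
    and g: "g = fls_shift (int M) (fps_to_fls (fps_of_poly q))" "b = poly (map_poly of_int q) omega * inverse omega ^ M"
  have "f = fls_shift (int (N + M)) (fps_to_fls (fps_of_poly (monom 1 M * p)))"
    "g = fls_shift (int (N + M)) (fps_to_fls (fps_of_poly (monom 1 N * q)))"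
    by (simp_all add: f g fls_shift_fps_of_poly[symmetric])
  then have "f + g = fls_shift (int (N + M)) (fps_to_fls (fps_of_poly (monom 1 M * p + monom 1 N * q)))"
    by (simp add: fps_of_poly_add del: of_nat_add)
  moreover have "a + b = poly (map_poly of_int (monom 1 M * p + monom 1 N * q)) omega * inverse omega ^ (N + M)"
    using omega_nonzero
    by (simp add: f g map_poly_of_int_mult map_poly_of_int_add map_poly_monom poly_monom power_add field_simps)
  ultimately show ?thesis unfolding omega_value_def by blast
qed

lemma omega_value_uminus: "omega_value f a \<Longrightarrow> omega_value (- f) (- a)"
proof (elim omega_valueE)
  fix N p
  assume f: "f = fls_shift (int N) (fps_to_fls (fps_of_poly p))" "a = poly (map_poly of_int p) omega * inverse omega ^ N"
  have "- f = fls_shift (int N) (fps_to_fls (fps_of_poly (- p)))" by (simp add: f fps_of_poly_uminus)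
  moreover have "- a = poly (map_poly of_int (- p)) omega * inverse omega ^ N" by (simp add: f map_poly_of_int_uminus)
  ultimately show ?thesis unfolding omega_value_def by blast
qed

lemma omega_value_zero: "omega_value 0 0"
  unfolding omega_value_def by (rule exI[of _ 0], rule exI[of _ 0]) simp

lemma omega_value_one: "omega_value 1 1"
  unfolding omega_value_def by (rule exI[of _ 0], rule exI[of _ 1]) simp

lemma omega_value_s_pow: "omega_value (s_pow z) (omega powi z)"
proof (cases "z \<ge> 0")
  case True
  have "s_pow z = fls_shift (int 0) (fps_to_fls (fps_of_poly (monom 1 (nat z))))"
    using True fls_shift_fps_of_poly[of "nat z" 1] by (simp add: s_pow_def)
  moreover have "omega powi z = poly (map_poly of_int (monom 1 (nat z))) omega * inverse omega ^ 0"
    using True by (simp add: power_int_def map_poly_monom poly_monom)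
  ultimately show ?thesis unfolding omega_value_def by blast
next
  case False
  have "s_pow z = fls_shift (int (nat (-z))) (fps_to_fls (fps_of_poly 1))"
    using False by (simp add: s_pow_def)
  moreover have "omega powi z = poly (map_poly of_int 1) omega * inverse omega ^ (nat (-z))"
    using False by (simp add: power_int_def)
  ultimately show ?thesis unfolding omega_value_def by blast
qed

lemma omega_value_sum:
  "finite A \<Longrightarrow> (\<And>x. x \<in> A \<Longrightarrow> omega_value (f x) (c x)) \<Longrightarrow> omega_value (\<Sum>x\<in>A. f x) (\<Sum>x\<in>A. c x)"
  by (induction A rule: finite_induct) (simp_all add: omega_value_zero omega_value_add)

lemma omega_value_prod:
  "finite A \<Longrightarrow> (\<And>x. x \<in> A \<Longrightarrow> omega_value (f x) (c x)) \<Longrightarrow> omega_value (\<Prod>x\<in>A. f x) (\<Prod>x\<in>A. c x)"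
  by (induction A rule: finite_induct) (simp_all add: omega_value_one omega_value_mult)

lemma omega_value_power: "omega_value f c \<Longrightarrow> omega_value (f ^ m) (c ^ m)"
  by (induction m) (simp_all add: omega_value_one omega_value_mult)

lemma omega_value_nonzero: "omega_value f c \<Longrightarrow> c \<noteq> 0 \<Longrightarrow> f \<noteq> 0"
  by (auto elim!: omega_valueE simp: fls_shift_eq0_iff fps_of_poly_eq_iff[of _ 0, simplified])

lemma omega_value_loop_value: "omega_value loop_value 1"
proof -
  have "omega_value loop_value (- (omega powi 1 + omega powi (-1)))"
    unfolding loop_value_eq by (intro omega_value_uminus omega_value_add omega_value_s_pow)
  moreover have "- (omega powi 1 + omega powi (-1)) = 1"
    by (simp add: power_int_minus inverse_omega)
  ultimately show ?thesis by simp
qed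

lemma omega_crossing_sum:
  assumes "e = 1 \<or> e = -1"
  shows "omega powi (2 * e) + omega powi e = -1"
  using assms
proof
  assume "e = -1"
  have "omega powi (-2) = inverse omega * inverse omega"
    by (simp add: power_int_minus power2_eq_square)
  with \<open>e = -1\<close> show ?thesis by (simp add: inverse_omega algebra_simps omega_squared)
qed (simp add: power2_eq_square omega_squared)

lemma sum_Pow_prod_if:
  fixes f g :: "'a \<Rightarrow> 'b::comm_semiring_1"
  assumes "finite A"
  shows "(\<Sum>S\<in>Pow A. \<Prod>p\<in>A. if p \<in> S then f p else g p) = (\<Prod>p\<in>A. f p + g p)"
proof -
  have "(\<Prod>p\<in>A. f p + g p) = (\<Sum>S\<in>Pow A. prod f S * prod g (A - S))"
    by (rule prod_add[OF assms])
  also have "\<dots> = (\<Sum>S\<in>Pow A. \<Prod>p\<in>A. if p \<in> S then f p else g p)"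
  proof (rule sum.cong)
    fix S assume "S \<in> Pow A"
    then have "A \<inter> {x. x \<in> S} = S" "A \<inter> - {x. x \<in> S} = A - S" by auto
    then show "prod f S * prod g (A - S) = (\<Prod>p\<in>A. if p \<in> S then f p else g p)"
      using prod.If_cases[OF assms, of "\<lambda>x. x \<in> S" f g] by simp
  qed simp
  finally show ?thesis by simp
qed

lemma jones_nonzero:
  assumes signs: "\<forall>x\<in>set w. snd x = 1 \<or> snd x = -1"
  shows "jones n w \<noteq> 0"
proof -
  define N where "N = length w"
  let ?t = "\<lambda>S p. omega powi (if p \<in> S then 2 * snd (w ! p) else snd (w ! p))"
  have "omega_value (jones n w) ((-1) ^ N * (\<Sum>S\<in>Pow {..<N}. (\<Prod>p<N. ?t S p) * 1 ^ (state_loops n w S - 1)))"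
    unfolding jones_eq_state_sum N_def[symmetric] state_weight_def
    by (intro omega_value_mult omega_value_power omega_value_uminus omega_value_one omega_value_sum
        omega_value_prod omega_value_s_pow omega_value_loop_value) simp_all
  also have "(\<Sum>S\<in>Pow {..<N}. (\<Prod>p<N. ?t S p) * 1 ^ (state_loops n w S - 1))
      = (\<Prod>p<N. omega powi (2 * snd (w ! p)) + omega powi (snd (w ! p)))"
    by (simp add: if_distrib sum_Pow_prod_if)
  also have "\<dots> = (\<Prod>p<N. -1)"
    using signs by (intro prod.cong) (auto simp: N_def omega_crossing_sum)
  finally have "omega_value (jones n w) 1"
    by (simp add: power_mult_distrib[symmetric])
  then show ?thesis by (rule omega_value_nonzero) simp
qed

section \<open>Varying one exponent of a product of generator powers\<close>

definition power_word_list :: "(nat \<Rightarrow> nat) \<Rightarrow> (nat \<Rightarrow> int) \<Rightarrow> nat list \<Rightarrow> braid_word" where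
  "power_word_list i a hs = concat (map (\<lambda>h. replicate (nat \<bar>a h\<bar>) (i h, sgn (a h))) hs)"

lemma power_word_conv_power_word_list: "power_word k i a = power_word_list i a [0..<k]"
  by (simp add: power_word_def power_word_list_def)

lemma power_word_list_append: "power_word_list i a (hs @ hs') = power_word_list i a hs @ power_word_list i a hs'"
  by (simp add: power_word_list_def)

lemma power_word_list_Cons: "power_word_list i a (h # hs) = replicate (nat \<bar>a h\<bar>) (i h, sgn (a h)) @ power_word_list i a hs"
  by (simp add: power_word_list_def)

lemma set_power_word_list:
  "x \<in> set (power_word_list i a hs) \<Longrightarrow> \<exists>h\<in>set hs. x = (i h, sgn (a h)) \<and> a h \<noteq> 0"
  by (auto simp: power_word_list_def split: if_splits)

lemma power_word_list_cong: "(\<And>h. h \<in> set hs \<Longrightarrow> a h = a' h) \<Longrightarrow> power_word_list i a hs = power_word_list i a' hs"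
  by (simp add: power_word_list_def cong: map_cong)

lemma power_word_signs:
  assumes "x \<in> set (power_word k i a)" shows "snd x = 1 \<or> snd x = -1"
proof -
  from assms obtain h where "x = (i h, sgn (a h))" "a h \<noteq> 0"
    unfolding power_word_conv_power_word_list by (auto dest: set_power_word_list)
  then show ?thesis by (simp add: sgn_if)
qed

lemma is_braid_word_power_word_list:
  "(\<And>h. h \<in> set hs \<Longrightarrow> 1 \<le> i h \<and> i h < n) \<Longrightarrow> is_braid_word n (power_word_list i a hs)"
  by (force simp: is_braid_word_def dest: set_power_word_list)

lemma jones_power_word_update:
  assumes gens: "\<forall>h<k. 1 \<le> i h \<and> i h < n" and j: "j < k"
  obtains c where "is_braid_word n c"
    and "\<And>e. jones n (power_word k i (a(j := e))) = jones n (c @ replicate (nat \<bar>e\<bar>) (i j, sgn e))"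
proof
  let ?u = "power_word_list i a [0..<j]" and ?v = "power_word_list i a [Suc j..<k]"
  show "is_braid_word n (?v @ ?u)"
    using gens j by (auto intro!: is_braid_word_power_word_list)
  fix e
  have split: "[0..<k] = [0..<j] @ j # [Suc j..<k]"
    using j by (metis le_add1 less_imp_le_nat upt_add_eq_append upt_conv_Cons add_0 le_add_diff_inverse)
  have "power_word_list i (a(j := e)) [0..<j] = ?u" "power_word_list i (a(j := e)) [Suc j..<k] = ?v"
    by (auto intro: power_word_list_cong)
  then have word: "power_word k i (a(j := e)) = ?u @ replicate (nat \<bar>e\<bar>) (i j, sgn e) @ ?v"
    unfolding power_word_conv_power_word_list split power_word_list_append power_word_list_Cons
    by simp
  have "jones n (power_word k i (a(j := e))) = jones n ((replicate (nat \<bar>e\<bar>) (i j, sgn e) @ ?v) @ ?u)"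
    unfolding word by (rule jones_append_commute)
  also have "\<dots> = jones n (replicate (nat \<bar>e\<bar>) (i j, sgn e) @ (?v @ ?u))"
    by simp
  also have "\<dots> = jones n ((?v @ ?u) @ replicate (nat \<bar>e\<bar>) (i j, sgn e))"
    by (rule jones_append_commute)
  finally show "jones n (power_word k i (a(j := e))) = jones n ((?v @ ?u) @ replicate (nat \<bar>e\<bar>) (i j, sgn e))" .
qed

theorem proposition3p5:
  fixes n k j :: nat and i :: "nat \<Rightarrow> nat" and a :: "nat \<Rightarrow> int"
    and V :: "int \<Rightarrow> int fls"
  assumes gens: "\<forall>h<k. 1 \<le> i h \<and> i h < n"
    and j: "j < k"
    and V_def: "\<forall>e. V e = jones n (power_word k i (a(j := e)))"
  shows "(\<forall>e::int.
           ord_fls (V (e + 2)) \<ge> 1 + min (ord_fls (V e)) (ord_fls (V (e + 1)))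
         \<and> (\<forall>m::int. m \<ge> 2 \<longrightarrow>
              ord_fls (V (e + m)) \<ge> min (ord_fls (V e)) (ord_fls (V (e + 1))) + (m - 1)))
         \<and> (\<exists>E. \<forall>e\<ge>E. \<forall>d<0. fls_nth (V e) d = 0)"
proof -
  obtain c where c: "is_braid_word n c"
    and jones_eq: "\<And>e. jones n (power_word k i (a(j := e))) = jones n (c @ replicate (nat \<bar>e\<bar>) (i j, sgn e))"
    using jones_power_word_update[OF gens j, of a] by blast
  have nz: "V e \<noteq> 0" for e
    using V_def jones_nonzero[of "power_word k i (a(j := e))" n] power_word_signs by simp
  have "1 \<le> i j" "i j < n" using gens j by simp_all
  then have rec: "V (e + 2) = (s_pow 3 - s_pow 1) * V (e + 1) + s_pow 4 * V e" for e
    by (intro second_order_recurrence[where Q = "jones_cupcap n c (i j)"])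
      (simp add: V_def jones_eq jones_power_step[OF c])
  have bound: "min (ord_fls (V e)) (ord_fls (V (e + 1))) + (m - 1) \<le> ord_fls (V (e + m))"
    if "2 \<le> m" for e m
    by (rule subdegree_bound_of_s_pow_recurrence[OF rec nz that])
  show ?thesis
  proof (intro conjI allI impI)
    fix e
    show "1 + min (ord_fls (V e)) (ord_fls (V (e + 1))) \<le> ord_fls (V (e + 2))"
      using bound[of 2 e] by (simp only: add.commute) simp
  next
    fix e m :: int
    assume "2 \<le> m"
    then show "min (ord_fls (V e)) (ord_fls (V (e + 1))) + (m - 1) \<le> ord_fls (V (e + m))"
      by (rule bound)
  qed (rule eventually_no_negative_powers[OF bound])
qed

end
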